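(* Let $\bar t>0$, $I=(0,\bar t)$, let $\gamma_1,\gamma_2\in\mathrm{Lip}(I)$ (extended continuously to $\bar I$) with $\gamma_1<0<\gamma_2$ on $I$, $\gamma_1(0)=\gamma_1(\bar t)=\gamma_2(0)=\gamma_2(\bar t)=0$, $\gamma_1$ convex and $\gamma_2$ concave, and let $D=\{(y,t)\in\mathbb W: t\in I,\ \gamma_1(t)<y<\gamma_2(t)\}$. Let $\phi\in C(\partial D)$ with $\phi_1,\phi_2\in\mathrm{Lip}(I)$, and assume $\zeta<(\sqrt{721}-25)/48$. Let $u\in\mathrm{Lip}(D)$ be a function with $u=\phi$ on $\partial D$ and $S_u=R_\phi$. Then there exist an open set $D^r\subset\mathbb W$ and $u^r\in\mathrm{Lip}_{loc}(D^r)$ such that $S_u=S^r_{u^r}$.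
   Context: $\mathbb H$ is $\mathbb R^3$ with product $(x,y,t)\cdot(\xi,\eta,\tau)=(x+\xi,y+\eta,t+\tau+2(y\xi-x\eta))$; $X=\partial_x+2y\partial_t$, $Y=\partial_y-2x\partial_t$, $H_p=\mathrm{span}\{X(p),Y(p)\}$. $\mathbb W=\{x=0\}$ with coordinates $(y,t)$. Left intrinsic graph of $u:D\to\mathbb R$: $S_u=\{(u(y,t),y,t+2yu(y,t)):(y,t)\in D\}$. Right intrinsic graph of $v:D^r\to\mathbb R$: $S^r_v=\{(v(y,t),y,t-2yv(y,t)):(y,t)\in D^r\}$. Set $\phi_i(s)=\phi(\gamma_i(s),s)$, $\|\gamma\|_\infty=\max_i\|\gamma_i\|_\infty$, $\mathrm{Lip}(\gamma)=\max_i\mathrm{Lip}(\gamma_i)$, $\|\phi\|_\infty=\max_i\|\phi_i\|_\infty$, $\mathrm{Lip}(\phi)=\max_i\mathrm{Lip}(\phi_i)$, $\zeta=4(\|\gamma\|_\infty+\mathrm{Lip}(\gamma))(\|\phi\|_\infty+\mathrm{Lip}(\phi))$. Let $p_i(s)=(\phi_i(s),\gamma_i(s),s+2\gamma_i(s)\phi_i(s))$, $s\in\bar I$. When $\zeta<1$, for each $s\in\bar I$ there is a unique $\lambda(s)\in\bar I$ with $p_2(\lambda(s))-p_1(s)\in H_{p_1(s)}$ (equivalently $\lambda(s)-s+2(\gamma_2(\lambda(s))-\gamma_1(s))(\phi_2(\lambda(s))+\phi_1(s))=0$). Then $\rho(h,s)=(1-h)p_1(s)+h\,p_2(\lambda(s))$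 for $(h,s)\in Q=(0,1)\times I$, and $R_\phi:=\rho(Q)$ is the horizontally ruled surface spanned by $\phi$. *)

theory Defs
  imports "HOL-Analysis.Analysis"
begin

text \<open>Heisenberg group H = R^3 with coordinates (x,y,t); the vertical plane W = {x=0}
  with coordinates (y,t) is represented by real \<times> real.\<close>

definition horX :: "real \<times> real \<times> real \<Rightarrow> real \<times> real \<times> real" where
  "horX p = (case p of (x,y,t) \<Rightarrow> (1, 0, 2 * y))"

definition horY :: "real \<times> real \<times> real \<Rightarrow> real \<times> real \<times> real" where
  "horY p = (case p of (x,y,t) \<Rightarrow> (0, 1, - 2 * x))"

definition horizontal_plane :: "real \<times> real \<times> real \<Rightarrow> (real \<times> real \<times> real) set" where
  "horizontal_plane p = span {horX p, horY p}"

definition left_graph :: "(real \<times> real \<Rightarrow> real) \<Rightarrow> (real \<times> real) set \<Rightarrow> (real \<times> real \<times> real) set" where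
  "left_graph u D = (\<lambda>(y,t). (u (y,t), y, t + 2 * y * u (y,t))) ` D"

definition right_graph :: "(real \<times> real \<Rightarrow> real) \<Rightarrow> (real \<times> real) set \<Rightarrow> (real \<times> real \<times> real) set" where
  "right_graph v Dr = (\<lambda>(y,t). (v (y,t), y, t - 2 * y * v (y,t))) ` Dr"

definition sup_norm :: "(real \<Rightarrow> real) \<Rightarrow> real set \<Rightarrow> real" where
  "sup_norm f S = (SUP x\<in>S. \<bar>f x\<bar>)"

definition lip_const :: "(real \<Rightarrow> real) \<Rightarrow> real set \<Rightarrow> real" where
  "lip_const f S = (SUP pq\<in>{(x,y). x \<in> S \<and> y \<in> S \<and> x \<noteq> y}.
      \<bar>f (fst pq) - f (snd pq)\<bar> / \<bar>fst pq - snd pq\<bar>)"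

definition locally_lipschitz_on :: "('a::metric_space \<Rightarrow> 'b::metric_space) \<Rightarrow> 'a set \<Rightarrow> bool" where
  "locally_lipschitz_on f S \<longleftrightarrow>
     (\<forall>p\<in>S. \<exists>e>0. \<exists>L. L-lipschitz_on (ball p e \<inter> S) f)"

definition bdry_fun :: "(real \<times> real \<Rightarrow> real) \<Rightarrow> (real \<Rightarrow> real) \<Rightarrow> real \<Rightarrow> real" where
  "bdry_fun \<phi> \<gamma> s = \<phi> (\<gamma> s, s)"

definition zeta :: "real set \<Rightarrow> (real \<Rightarrow> real) \<Rightarrow> (real \<Rightarrow> real) \<Rightarrow> (real \<times> real \<Rightarrow> real) \<Rightarrow> real" where
  "zeta I \<gamma>1 \<gamma>2 \<phi> =
     4 * (max (sup_norm \<gamma>1 I) (sup_norm \<gamma>2 I) + max (lip_const \<gamma>1 I) (lip_const \<gamma>2 I))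
       * (max (sup_norm (bdry_fun \<phi> \<gamma>1) I) (sup_norm (bdry_fun \<phi> \<gamma>2) I)
          + max (lip_const (bdry_fun \<phi> \<gamma>1) I) (lip_const (bdry_fun \<phi> \<gamma>2) I))"

definition curve_pt :: "(real \<times> real \<Rightarrow> real) \<Rightarrow> (real \<Rightarrow> real) \<Rightarrow> real \<Rightarrow> real \<times> real \<times> real" where
  "curve_pt \<phi> \<gamma> s = (bdry_fun \<phi> \<gamma> s, \<gamma> s, s + 2 * \<gamma> s * bdry_fun \<phi> \<gamma> s)"

definition ruling_param :: "real \<Rightarrow> (real \<Rightarrow> real) \<Rightarrow> (real \<Rightarrow> real) \<Rightarrow> (real \<times> real \<Rightarrow> real) \<Rightarrow> real \<Rightarrow> real" where
  "ruling_param tbar \<gamma>1 \<gamma>2 \<phi> s =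
     (THE l. l \<in> {0..tbar} \<and>
        curve_pt \<phi> \<gamma>2 l - curve_pt \<phi> \<gamma>1 s \<in> horizontal_plane (curve_pt \<phi> \<gamma>1 s))"

definition ruling_map :: "real \<Rightarrow> (real \<Rightarrow> real) \<Rightarrow> (real \<Rightarrow> real) \<Rightarrow> (real \<times> real \<Rightarrow> real) \<Rightarrow> real \<times> real \<Rightarrow> real \<times> real \<times> real" where
  "ruling_map tbar \<gamma>1 \<gamma>2 \<phi> hs =
     (case hs of (h, s) \<Rightarrow>
        (1 - h) *\<^sub>R curve_pt \<phi> \<gamma>1 s + h *\<^sub>R curve_pt \<phi> \<gamma>2 (ruling_param tbar \<gamma>1 \<gamma>2 \<phi> s))"

definition ruled_surface :: "real \<Rightarrow> (real \<Rightarrow> real) \<Rightarrow> (real \<Rightarrow> real) \<Rightarrow> (real \<times> real \<Rightarrow> real) \<Rightarrow> (real \<times> real \<times> real) set" where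
  "ruled_surface tbar \<gamma>1 \<gamma>2 \<phi> = ruling_map tbar \<gamma>1 \<gamma>2 \<phi> ` ({0<..<1} \<times> {0<..<tbar})"

end

theory Submission
  imports Defs "HOL-Homology.Invariance_of_Domain"
begin

text \<open>Parametrise the surface by the base point \<open>s\<close> of a ruling and the height \<open>y\<close>. Along a
  horizontal slice \<open>y = const\<close>, both the left-graph coordinate \<open>t\<close> of a point and its
  right-graph coordinate \<open>t + 4 y u(y, t)\<close> are functions of \<open>s\<close>. Because \<open>\<zeta>\<close> is small they
  behave almost like \<open>s\<close> itself: the first has slope at most 3 and the second has slope at
  least 1/4. So \<open>(y, t) \<mapsto> (y, t + 4 y u(y, t))\<close> is a continuous injection of the open set
  \<open>D\<close>, and its inverse is Lipschitz along each slice. By invariance of domain its image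
  \<open>D\<^sup>r\<close> is open, and transporting \<open>u\<close> to \<open>D\<^sup>r\<close> gives a locally Lipschitz function whose
  right intrinsic graph is \<open>S\<^sub>u\<close>.\<close>

lemma abs_mult_mono:
  fixes a b x y :: real
  assumes "\<bar>a\<bar> \<le> x" "\<bar>b\<bar> \<le> y"
  shows "\<bar>a * b\<bar> \<le> x * y"
  using assms by (simp add: abs_mult mult_mono')

lemma lipschitz_on_abs_diff:
  fixes f :: "real \<Rightarrow> real"
  assumes "L-lipschitz_on S f" "x \<in> S" "y \<in> S"
  shows "\<bar>f x - f y\<bar> \<le> L * \<bar>x - y\<bar>"
  using lipschitz_onD[OF assms] by (simp add: dist_real_def)

lemma dist_Pair_le: "dist (a, b) (c, d) \<le> dist a c + dist b d"
  using dist_triangle[of "(a, b)" "(c, d)" "(c, b)"] by (simp add: dist_Pair_Pair dist_commute)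

lemma mono_on_if_locally_mono_on:
  fixes F :: "real \<Rightarrow> 'a::linorder"
  assumes J: "is_interval J"
    and loc: "\<And>s. s \<in> J \<Longrightarrow> \<exists>d>0. mono_on (J \<inter> ball s d) F"
  shows "mono_on J F"
proof (rule mono_onI)
  fix a b assume a: "a \<in> J" and b: "b \<in> J" and "a \<le> b"
  \<comment> \<open>\<open>c\<close> is the supremum of the points up to which \<open>F\<close> stays above \<open>F a\<close>; local monotonicity
    at \<open>c\<close> pushes this point beyond \<open>c\<close> unless \<open>c = b\<close>.\<close>
  have sub: "{a..b} \<subseteq> J" using mem_is_interval_1_I[OF J a b] by auto
  define A where "A = {x \<in> {a..b}. \<forall>z\<in>{a..x}. F a \<le> F z}"
  define c where "c = Sup A"
  have "a \<in> A" using \<open>a \<le> b\<close> by (simp add: A_def)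
  have bdd: "bdd_above A" unfolding A_def by (rule bdd_aboveI[of _ b]) auto
  have "a \<le> c" unfolding c_def by (rule cSup_upper[OF \<open>a \<in> A\<close> bdd])
  moreover have "c \<le> b" unfolding c_def using \<open>a \<in> A\<close> by (intro cSup_least) (auto simp: A_def)
  ultimately obtain d where "d > 0" and mono: "mono_on (J \<inter> ball c d) F"
    using loc sub by force
  obtain x where "x \<in> A" "c - d < x"
    using less_cSup_iff[OF _ bdd, of "c - d"] \<open>a \<in> A\<close> \<open>d > 0\<close> unfolding c_def by force
  have "x \<le> c" unfolding c_def by (rule cSup_upper[OF \<open>x \<in> A\<close> bdd])
  have x: "a \<le> x" "x \<le> b" "\<And>z. z \<in> {a..x} \<Longrightarrow> F a \<le> F z" using \<open>x \<in> A\<close> by (auto simp: A_def)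
  define x' where "x' = min b (c + d / 2)"
  have Fz: "F a \<le> F z" if z: "a \<le> z" "z \<le> x'" for z
  proof (cases "z \<le> x")
    case True
    then show ?thesis using x(3) z(1) by simp
  next
    case False
    have "x \<in> J \<inter> ball c d"
      using sub x \<open>x \<le> c\<close> \<open>c - d < x\<close> by (auto simp: dist_real_def)
    moreover have "z \<in> J \<inter> ball c d"
      using sub False x z \<open>x \<le> c\<close> \<open>c - d < x\<close> \<open>d > 0\<close> \<open>c \<le> b\<close>
      by (auto simp: dist_real_def x'_def)
    ultimately have "F x \<le> F z" using mono_onD[OF mono] False by simp
    moreover have "F a \<le> F x" using x by simp
    ultimately show ?thesis by (rule order_trans[rotated])
  qed
  have "a \<le> x'" "x' \<le> b" using \<open>a \<le> c\<close> \<open>c \<le> b\<close> \<open>d > 0\<close> by (simp_all add: x'_def)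
  then have "x' \<in> A" using Fz by (simp add: A_def)
  then have "x' \<le> c" unfolding c_def by (rule cSup_upper[OF _ bdd])
  then have "x' = b" using \<open>d > 0\<close> by (auto simp: x'_def)
  then show "F a \<le> F b" using \<open>x' \<in> A\<close> by (auto simp: A_def)
qed

lemma abs_le_sup_norm:
  fixes f :: "real \<Rightarrow> real"
  assumes "bounded (f ` S)" "x \<in> S"
  shows "\<bar>f x\<bar> \<le> sup_norm f S"
proof -
  obtain B where "\<forall>y\<in>S. \<bar>f y\<bar> \<le> B" using assms(1) by (auto simp: bounded_iff)
  then have "bdd_above ((\<lambda>y. \<bar>f y\<bar>) ` S)" by (intro bdd_aboveI2) auto
  then show ?thesis unfolding sup_norm_def by (rule cSUP_upper[OF assms(2)])
qed

text \<open>The two distinct points are needed only for \<open>0 \<le> lip_const f S\<close>: on a set with fewer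
  points \<open>lip_const f S\<close> is the junk value \<open>Sup {}\<close>.\<close>

lemma lipschitz_on_lip_const:
  fixes f :: "real \<Rightarrow> real"
  assumes f: "L-lipschitz_on S f" and "x \<in> S" "y \<in> S" "x \<noteq> y"
  shows "(lip_const f S)-lipschitz_on S f"
proof -
  define P where "P = {(x, y). x \<in> S \<and> y \<in> S \<and> x \<noteq> y}"
  define q where "q = (\<lambda>pq. \<bar>f (fst pq) - f (snd pq)\<bar> / \<bar>fst pq - snd pq\<bar>)"
  have bdd: "bdd_above (q ` P)"
  proof (rule bdd_aboveI2)
    fix pq assume "pq \<in> P"
    then show "q pq \<le> L"
      using lipschitz_on_abs_diff[OF f, of "fst pq" "snd pq"]
      by (auto simp: P_def q_def divide_le_eq)
  qed
  have le: "q pq \<le> lip_const f S" if "pq \<in> P" for pq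
    unfolding lip_const_def q_def[symmetric] P_def[symmetric] by (rule cSUP_upper[OF that bdd])
  show ?thesis
  proof (rule lipschitz_onI)
    fix x' y' assume "x' \<in> S" "y' \<in> S"
    then show "dist (f x') (f y') \<le> lip_const f S * dist x' y'"
      using le[of "(x', y')"] by (cases "x' = y'") (auto simp: P_def q_def dist_real_def divide_le_eq)
  next
    have "0 \<le> q (x, y)" by (simp add: q_def)
    then show "0 \<le> lip_const f S" using le[of "(x, y)"] assms(2-4) by (auto simp: P_def)
  qed
qed

lemma lipschitz_on_Icc_if_lip_const_le:
  fixes f :: "real \<Rightarrow> real"
  assumes "a < b" "\<exists>L. L-lipschitz_on {a<..<b} f" "continuous_on {a..b} f"
    and "lip_const f {a<..<b} \<le> C"
  shows "C-lipschitz_on {a..b} f"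
proof -
  obtain L where L: "L-lipschitz_on {a<..<b} f" using assms(2) by blast
  have "(2 * a + b) / 3 \<in> {a<..<b}" "(a + 2 * b) / 3 \<in> {a<..<b}" "(2 * a + b) / 3 \<noteq> (a + 2 * b) / 3"
    using \<open>a < b\<close> by auto
  then have "(lip_const f {a<..<b})-lipschitz_on {a<..<b} f"
    by (rule lipschitz_on_lip_const[OF L])
  then have "(lip_const f {a<..<b})-lipschitz_on {a..b} f"
    using lipschitz_on_closure[of _ "{a<..<b}" f] assms(3) \<open>a < b\<close> by simp
  then show ?thesis using assms(4) by (rule lipschitz_on_le)
qed

lemma abs_le_Icc_if_sup_norm_le:
  fixes f :: "real \<Rightarrow> real"
  assumes "a < b" "continuous_on {a..b} f" "sup_norm f {a<..<b} \<le> M"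
  shows "\<forall>x\<in>{a..b}. \<bar>f x\<bar> \<le> M"
proof -
  have "bounded (f ` {a..b})"
    by (rule compact_imp_bounded[OF compact_continuous_image[OF assms(2) compact_Icc]])
  then have "\<bar>f x\<bar> \<le> M" if "x \<in> {a<..<b}" for x
    using that assms(3) by (intro order_trans[OF abs_le_sup_norm]) (auto elim: bounded_subset)
  then have "f ` closure {a<..<b} \<subseteq> cball 0 M"
    using assms(1,2) by (intro image_closure_subset) auto
  then show ?thesis using \<open>a < b\<close> by auto
qed

lemma open_region_between:
  fixes g1 g2 :: "real \<Rightarrow> real"
  assumes g1: "continuous_on {a<..<b} g1" and g2: "continuous_on {a<..<b} g2"
  shows "open {(y, t). t \<in> {a<..<b} \<and> g1 t < y \<and> y < g2 t}"
proof -
  define S where "S = (UNIV :: real set) \<times> {a<..<b}"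
  define f where "f p = (fst p - g1 (snd p), g2 (snd p) - fst p)" for p :: "real \<times> real"
  have "snd ` S \<subseteq> {a<..<b}" by (auto simp: S_def)
  then have "continuous_on S (\<lambda>p. g1 (snd p))" "continuous_on S (\<lambda>p. g2 (snd p))"
    by (auto intro: continuous_on_compose2[OF g1 continuous_on_snd[OF continuous_on_id]]
        continuous_on_compose2[OF g2 continuous_on_snd[OF continuous_on_id]])
  then have "continuous_on S f" unfolding f_def by (intro continuous_intros)
  moreover have "open S" "open ({0<..} \<times> {0<..} :: (real \<times> real) set)"
    by (auto simp: S_def intro: open_Times)
  ultimately have "open (S \<inter> f -` ({0<..} \<times> {0<..}))" by (rule continuous_open_preimage)
  moreover have "{(y, t). t \<in> {a<..<b} \<and> g1 t < y \<and> y < g2 t} = S \<inter> f -` ({0<..} \<times> {0<..})"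
    by (auto simp: S_def f_def)
  ultimately show ?thesis by simp
qed

lemma boundary_curves_in_frontier:
  fixes g1 g2 :: "real \<Rightarrow> real"
  assumes "a < b" "continuous_on {a..b} g1" "continuous_on {a..b} g2"
    and below: "\<forall>t\<in>{a<..<b}. g1 t < g2 t"
    and D: "D = {(y, t). t \<in> {a<..<b} \<and> g1 t < y \<and> y < g2 t}"
    and "t \<in> {a..b}"
  shows "(g1 t, t) \<in> frontier D" "(g2 t, t) \<in> frontier D"
proof -
  have "open D"
    unfolding D using assms(2,3) by (intro open_region_between) (auto elim: continuous_on_subset)
  then have frontier: "frontier D = closure D - D"
    by (simp add: frontier_def interior_open)
  have segment: "closed_segment (g1 s, s) (g2 s, s) \<subseteq> closure D" if "s \<in> {a<..<b}" for s
  proof -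
    have "open_segment (g1 s, s) (g2 s, s) \<subseteq> D"
    proof
      fix z assume "z \<in> open_segment (g1 s, s) (g2 s, s)"
      then obtain v where "0 < v" "v < 1" and z: "z = (g1 s + v * (g2 s - g1 s), s)"
        by (auto simp: in_segment algebra_simps)
      have "0 < g2 s - g1 s" using below that by auto
      then have "0 < v * (g2 s - g1 s)" "v * (g2 s - g1 s) < 1 * (g2 s - g1 s)"
        using \<open>0 < v\<close> \<open>v < 1\<close> by (intro mult_pos_pos mult_strict_right_mono; simp)+
      then show "z \<in> D" using that by (simp add: D z)
    qed
    then have "closure (open_segment (g1 s, s) (g2 s, s)) \<subseteq> closure D"
      by (rule closure_mono)
    moreover have "(g1 s, s) \<noteq> (g2 s, s)" using below that by fastforce
    ultimately show ?thesis by simp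
  qed
  have curve: "(g s, s) \<in> closure D"
    if "continuous_on {a..b} g" "\<forall>s\<in>{a<..<b}. (g s, s) \<in> closed_segment (g1 s, s) (g2 s, s)"
      and "s \<in> {a..b}" for g s
  proof -
    have "(\<lambda>s. (g s, s)) ` closure {a<..<b} \<subseteq> closure D"
    proof (rule image_closure_subset)
      show "continuous_on (closure {a<..<b}) (\<lambda>s. (g s, s))"
        using that(1) \<open>a < b\<close> by (auto intro!: continuous_intros)
      show "(\<lambda>s. (g s, s)) ` {a<..<b} \<subseteq> closure D" using that(2) segment by blast
    qed simp
    then show ?thesis using that(3) \<open>a < b\<close> by auto
  qed
  have "(g1 t, t) \<in> closure D" "(g2 t, t) \<in> closure D"
    using curve[OF assms(2)] curve[OF assms(3)] \<open>t \<in> {a..b}\<close> by auto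
  moreover have "(g1 t, t) \<notin> D" "(g2 t, t) \<notin> D" by (auto simp: D)
  ultimately show "(g1 t, t) \<in> frontier D" "(g2 t, t) \<in> frontier D"
    by (simp_all add: frontier)
qed

lemma continuous_on_bdry_fun:
  assumes "continuous_on (frontier D) \<phi>" "continuous_on S \<gamma>" "\<And>t. t \<in> S \<Longrightarrow> (\<gamma> t, t) \<in> frontier D"
  shows "continuous_on S (bdry_fun \<phi> \<gamma>)"
  unfolding bdry_fun_def using assms(2,3)
  by (intro continuous_on_compose2[OF assms(1)]) (auto intro!: continuous_intros)

section \<open>Horizontal planes and the ruling parameter\<close>

lemma horizontal_plane_iff:
  "(a, b, c) \<in> horizontal_plane (x, y, t) \<longleftrightarrow> c = 2 * y * a - 2 * x * b"
proof -
  have "horizontal_plane (x, y, t) = span {(1, 0, 2 * y), (0, 1, - 2 * x)}"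
    by (simp add: horizontal_plane_def horX_def horY_def)
  also have "\<dots> = {v. \<exists>k j. v - (k, 0, k * (2 * y)) = (0, j, - (j * (2 * x)))}"
    by (auto simp: span_insert span_singleton)
  finally show ?thesis
    by (auto simp: algebra_simps)
qed

text \<open>\<open>Gm\<close>, \<open>Lg\<close>, \<open>Ph\<close> and \<open>Lp\<close> bound \<open>\<parallel>\<gamma>\<parallel>\<^sub>\<infinity>\<close>, \<open>Lip(\<gamma>)\<close>, \<open>\<parallel>\<phi>\<parallel>\<^sub>\<infinity>\<close> and
  \<open>Lip(\<phi>)\<close> on the closed interval, so \<open>small\<close> says \<open>\<zeta> \<le> 1/24\<close>, which is implied by the
  hypothesis \<open>\<zeta> < (\<surd>721 - 25)/48\<close>.\<close>

locale ruling_data =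
  fixes tb :: real and g1 g2 :: "real \<Rightarrow> real" and \<phi> :: "real \<times> real \<Rightarrow> real"
    and Gm Lg Ph Lp :: real
  assumes tb_pos: "0 < tb"
    and sign: "\<And>t. t \<in> {0<..<tb} \<Longrightarrow> g1 t < 0 \<and> 0 < g2 t"
    and ends: "g1 0 = 0" "g1 tb = 0" "g2 0 = 0" "g2 tb = 0"
    and g1_convex: "convex_on {0<..<tb} g1" and g2_concave: "concave_on {0<..<tb} g2"
    and g1_lip: "Lg-lipschitz_on {0..tb} g1" and g2_lip: "Lg-lipschitz_on {0..tb} g2"
    and p1_lip: "Lp-lipschitz_on {0..tb} (bdry_fun \<phi> g1)"
    and p2_lip: "Lp-lipschitz_on {0..tb} (bdry_fun \<phi> g2)"
    and g1_bound: "\<forall>t\<in>{0..tb}. \<bar>g1 t\<bar> \<le> Gm" and g2_bound: "\<forall>t\<in>{0..tb}. \<bar>g2 t\<bar> \<le> Gm"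
    and p1_bound: "\<forall>t\<in>{0..tb}. \<bar>bdry_fun \<phi> g1 t\<bar> \<le> Ph"
    and p2_bound: "\<forall>t\<in>{0..tb}. \<bar>bdry_fun \<phi> g2 t\<bar> \<le> Ph"
    and small: "(Gm + Lg) * (Ph + Lp) \<le> 1/96"
begin

abbreviation "p1 \<equiv> bdry_fun \<phi> g1"
abbreviation "p2 \<equiv> bdry_fun \<phi> g2"
abbreviation "lam \<equiv> ruling_param tb g1 g2 \<phi>"

lemma constants_nonneg: "0 \<le> Gm" "0 \<le> Lg" "0 \<le> Ph" "0 \<le> Lp"
  using g1_bound p1_bound tb_pos lipschitz_on_nonneg[OF g1_lip] lipschitz_on_nonneg[OF p1_lip]
  by force+

lemma cross_terms_small: "Gm * Lp + Lg * Ph \<le> 1/96"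
proof -
  have "0 \<le> Gm * Ph + Lg * Lp" using constants_nonneg by simp
  then show ?thesis using small by (simp add: algebra_simps)
qed

definition ruling_defect :: "real \<Rightarrow> real \<Rightarrow> real" where
  "ruling_defect l s = l - s + 2 * (g2 l - g1 s) * (p2 l + p1 s)"

lemma horizontal_iff_ruling_defect:
  "curve_pt \<phi> g2 l - curve_pt \<phi> g1 s \<in> horizontal_plane (curve_pt \<phi> g1 s) \<longleftrightarrow> ruling_defect l s = 0"
  by (simp add: curve_pt_def horizontal_plane_iff ruling_defect_def algebra_simps)

text \<open>For small \<open>\<zeta>\<close> the defect is a small perturbation of \<open>l - s\<close>; existence, uniqueness and
  the bi-Lipschitz property of \<open>\<lambda>\<close> all follow from this estimate.\<close>

lemma ruling_defect_increment:
  assumes "l1 \<in> {0..tb}" "l2 \<in> {0..tb}" "s1 \<in> {0..tb}" "s2 \<in> {0..tb}"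
  shows "\<bar>(ruling_defect l2 s2 - ruling_defect l1 s1) - ((l2 - l1) - (s2 - s1))\<bar>
           \<le> (\<bar>l2 - l1\<bar> + \<bar>s2 - s1\<bar>) / 24"
proof -
  define m where "m = \<bar>l2 - l1\<bar> + \<bar>s2 - s1\<bar>"
  define E1 where "E1 = ((g2 l2 - g2 l1) - (g1 s2 - g1 s1)) * (p2 l2 + p1 s2)"
  define E2 where "E2 = (g2 l1 - g1 s1) * ((p2 l2 - p2 l1) + (p1 s2 - p1 s1))"
  have eq: "(ruling_defect l2 s2 - ruling_defect l1 s1) - ((l2 - l1) - (s2 - s1)) = 2 * E1 + 2 * E2"
    unfolding ruling_defect_def E1_def E2_def by (simp add: algebra_simps)
  have E1: "\<bar>E1\<bar> \<le> (Lg * m) * (2 * Ph)"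
    unfolding E1_def
  proof (rule abs_mult_mono)
    show "\<bar>(g2 l2 - g2 l1) - (g1 s2 - g1 s1)\<bar> \<le> Lg * m"
      using lipschitz_on_abs_diff[OF g2_lip, of l2 l1] lipschitz_on_abs_diff[OF g1_lip, of s2 s1] assms
      by (simp add: m_def distrib_left abs_le_iff)
    show "\<bar>p2 l2 + p1 s2\<bar> \<le> 2 * Ph"
      using p2_bound p1_bound assms abs_triangle_ineq[of "p2 l2" "p1 s2"] by force
  qed
  have E2: "\<bar>E2\<bar> \<le> (2 * Gm) * (Lp * m)"
    unfolding E2_def
  proof (rule abs_mult_mono)
    show "\<bar>g2 l1 - g1 s1\<bar> \<le> 2 * Gm"
      using g2_bound g1_bound assms abs_triangle_ineq4[of "g2 l1" "g1 s1"] by force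
    show "\<bar>(p2 l2 - p2 l1) + (p1 s2 - p1 s1)\<bar> \<le> Lp * m"
      using lipschitz_on_abs_diff[OF p2_lip, of l2 l1] lipschitz_on_abs_diff[OF p1_lip, of s2 s1] assms
      by (simp add: m_def distrib_left abs_le_iff)
  qed
  have "(Lg * m) * (2 * Ph) + (2 * Gm) * (Lp * m) \<le> m / 48"
  proof -
    have "(Gm * Lp + Lg * Ph) * m \<le> m / 96"
      using mult_right_mono[OF cross_terms_small, of m] by (simp add: m_def)
    then show ?thesis by (simp add: algebra_simps)
  qed
  then show ?thesis
    unfolding m_def[symmetric] eq abs_le_iff
    using abs_le_D1[OF E1] abs_le_D2[OF E1] abs_le_D1[OF E2] abs_le_D2[OF E2] by linarith
qed

lemma ruling_defect_strict_mono:
  assumes "l1 \<in> {0..tb}" "l2 \<in> {0..tb}" "s \<in> {0..tb}" "l1 < l2"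
  shows "ruling_defect l1 s < ruling_defect l2 s"
proof -
  have "\<bar>ruling_defect l2 s - ruling_defect l1 s - (l2 - l1)\<bar> \<le> (l2 - l1) / 24"
    using ruling_defect_increment[OF assms(1-3,3)] assms(4) by simp
  from abs_le_D2[OF this] show ?thesis using assms(4) by simp
qed

lemma ruling_defect_endpoints:
  assumes "s \<in> {0<..<tb}"
  shows "ruling_defect 0 s < 0" "0 < ruling_defect tb s"
proof -
  have mem: "0 \<in> {0..tb}" "tb \<in> {0..tb}" "s \<in> {0..tb}" using assms tb_pos by auto
  have "ruling_defect 0 0 = 0" "ruling_defect tb tb = 0"
    by (simp_all add: ruling_defect_def ends)
  then have "\<bar>ruling_defect 0 s + s\<bar> \<le> s / 24" "\<bar>ruling_defect tb s - (tb - s)\<bar> \<le> (tb - s) / 24"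
    using ruling_defect_increment[OF mem(1,1,1,3)] ruling_defect_increment[OF mem(2,2,2,3)] assms
    by simp_all
  from abs_le_D1[OF this(1)] abs_le_D2[OF this(2)]
  show "ruling_defect 0 s < 0" "0 < ruling_defect tb s"
    using assms by simp_all
qed

lemma ruling_param:
  assumes s: "s \<in> {0<..<tb}"
  shows "lam s \<in> {0<..<tb}" "ruling_defect (lam s) s = 0"
proof -
  have "continuous_on {0..tb} (\<lambda>l. ruling_defect l s)"
    unfolding ruling_defect_def
    using lipschitz_on_continuous_on[OF g2_lip] lipschitz_on_continuous_on[OF p2_lip]
    by (intro continuous_intros) auto
  then obtain l where l: "0 \<le> l" "l \<le> tb" "ruling_defect l s = 0"
    using IVT'[of "\<lambda>l. ruling_defect l s" 0 0 tb] ruling_defect_endpoints[OF s] tb_pos by force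
  have unique: "l' = l" if "l' \<in> {0..tb}" "ruling_defect l' s = 0" for l'
    using ruling_defect_strict_mono[of l' l s] ruling_defect_strict_mono[of l l' s] that l s
    by (cases l' l rule: linorder_cases) auto
  have "lam s = l"
    unfolding ruling_param_def horizontal_iff_ruling_defect
  proof (rule the_equality)
    show "l \<in> {0..tb} \<and> ruling_defect l s = 0" using l by simp
  qed (use unique in blast)
  moreover have "l \<noteq> 0" "l \<noteq> tb" using l(3) ruling_defect_endpoints[OF s] by auto
  ultimately show "lam s \<in> {0<..<tb}" "ruling_defect (lam s) s = 0"
    using l by auto
qed

lemma ruling_param_increment:
  assumes "s1 \<in> {0<..<tb}" "s2 \<in> {0<..<tb}" "s1 < s2"
  shows "lam s1 < lam s2" "lam s2 - lam s1 \<le> 2 * (s2 - s1)"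
proof -
  define dl where "dl = lam s2 - lam s1"
  define ds where "ds = s2 - s1"
  have "0 < ds" using assms(3) by (simp add: ds_def)
  have "lam s1 \<in> {0..tb}" "lam s2 \<in> {0..tb}" "s1 \<in> {0..tb}" "s2 \<in> {0..tb}"
    using ruling_param(1)[OF assms(1)] ruling_param(1)[OF assms(2)] assms(1,2) by auto
  from ruling_defect_increment[OF this, folded dl_def ds_def]
  have "\<bar>0 - 0 - (dl - ds)\<bar> \<le> (\<bar>dl\<bar> + \<bar>ds\<bar>) / 24"
    unfolding ruling_param(2)[OF assms(1)] ruling_param(2)[OF assms(2)] .
  then have close: "24 * \<bar>ds - dl\<bar> \<le> \<bar>dl\<bar> + ds"
    using abs_of_pos[OF \<open>0 < ds\<close>] by (simp add: abs_minus_commute)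
  have "0 < dl"
  proof (rule ccontr)
    assume "\<not> 0 < dl"
    then have "\<bar>dl\<bar> = - dl" "\<bar>ds - dl\<bar> = ds - dl"
      using \<open>0 < ds\<close> by (simp_all add: abs_of_nonpos abs_of_pos)
    then have "24 * (ds - dl) \<le> - dl + ds" using close by simp
    moreover have "24 * (ds - dl) = 24 * ds - 24 * dl" by (simp add: algebra_simps)
    ultimately show False using \<open>\<not> 0 < dl\<close> \<open>0 < ds\<close> by linarith
  qed
  moreover have "dl \<le> 2 * ds"
  proof (cases "dl \<le> ds")
    case False
    then have "\<bar>dl\<bar> = dl" "\<bar>ds - dl\<bar> = dl - ds"
      using \<open>0 < dl\<close> by (simp_all add: abs_of_pos abs_of_neg)
    then have "24 * (dl - ds) \<le> dl + ds" using close by simp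
    moreover have "24 * (dl - ds) = 24 * dl - 24 * ds" by (simp add: algebra_simps)
    ultimately show ?thesis using \<open>0 < ds\<close> by linarith
  qed (use \<open>0 < ds\<close> in linarith)
  ultimately show "lam s1 < lam s2" "lam s2 - lam s1 \<le> 2 * (s2 - s1)"
    unfolding dl_def ds_def by simp_all
qed

lemma ruling_param_mono:
  assumes "s1 \<in> {0<..<tb}" "s2 \<in> {0<..<tb}" "s1 \<le> s2"
  shows "lam s1 \<le> lam s2"
proof (cases "s1 = s2")
  case False
  then show ?thesis using ruling_param_increment(1)[OF assms(1,2)] assms(3) by simp
qed simp

lemma ruling_param_lipschitz: "2-lipschitz_on {0<..<tb} lam"
proof (rule lipschitz_on_leI)
  fix s1 s2 assume "s1 \<in> {0<..<tb}" "s2 \<in> {0<..<tb}" "s1 \<le> s2"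
  then show "dist (lam s1) (lam s2) \<le> 2 * dist s1 s2"
    using ruling_param_increment[of s1 s2] by (cases "s1 = s2") (auto simp: dist_real_def)
qed simp

lemma lipschitz_on_comp_ruling_param:
  assumes "L-lipschitz_on {0..tb} f"
  shows "(2 * L)-lipschitz_on {0<..<tb} (\<lambda>s. f (lam s))"
proof -
  have "L-lipschitz_on (lam ` {0<..<tb}) f"
    by (rule lipschitz_on_subset[OF assms]) (auto dest: ruling_param(1))
  then show ?thesis
    using lipschitz_on_compose2[OF ruling_param_lipschitz] by (simp add: mult.commute)
qed

section \<open>Slices of the ruled surface\<close>

text \<open>The ruling from \<open>p\<^sub>1(s)\<close> to \<open>p\<^sub>2(\<lambda>(s))\<close> crosses the plane of height \<open>y\<close> iff
  \<open>s \<in> ruling_dom y\<close>, at the fraction \<open>ruling_frac y s\<close> of its length. The crossing point has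
  \<open>x\<close>-coordinate \<open>ruling_x y s\<close>, and \<open>ruling_t y s\<close> and \<open>ruling_tr y s\<close> are its
  \<open>t\<close>-coordinates as a point of a left and of a right intrinsic graph.\<close>

definition ruling_width :: "real \<Rightarrow> real" where
  "ruling_width s = g2 (lam s) - g1 s"

definition ruling_frac :: "real \<Rightarrow> real \<Rightarrow> real" where
  "ruling_frac y s = (y - g1 s) / ruling_width s"

definition ruling_x :: "real \<Rightarrow> real \<Rightarrow> real" where
  "ruling_x y s = p1 s + ruling_frac y s * (p2 (lam s) - p1 s)"

definition ruling_t :: "real \<Rightarrow> real \<Rightarrow> real" where
  "ruling_t y s = s - 2 * (y - g1 s) * (p1 s + ruling_x y s)"

definition ruling_tr :: "real \<Rightarrow> real \<Rightarrow> real" where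
  "ruling_tr y s = ruling_t y s + 4 * y * ruling_x y s"

definition ruling_dom :: "real \<Rightarrow> real set" where
  "ruling_dom y = {s \<in> {0<..<tb}. g1 s < y \<and> y < g2 (lam s)}"

lemma ruling_width_pos:
  assumes "s \<in> {0<..<tb}"
  shows "g1 s < 0" "0 < g2 (lam s)" "0 < ruling_width s"
  using sign[OF assms] sign[OF ruling_param(1)[OF assms]] by (auto simp: ruling_width_def)

lemma ruling_param_eq:
  assumes "s \<in> {0<..<tb}"
  shows "lam s = s - 2 * ruling_width s * (p2 (lam s) + p1 s)"
  using ruling_param(2)[OF assms] unfolding ruling_defect_def ruling_width_def by linarith

lemma ruling_map_coords:
  assumes s: "s \<in> {0<..<tb}" and h: "h \<in> {0<..<1}"
    and "ruling_map tb g1 g2 \<phi> (h, s) = (x, y, t)"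
  shows "s \<in> ruling_dom y" "x = ruling_x y s" "t - 2 * y * x = ruling_t y s"
proof -
  define G where "G = g2 (lam s)"
  define B where "B = p2 (lam s)"
  have x: "x = (1 - h) * p1 s + h * B" and y: "y = (1 - h) * g1 s + h * G"
    and t: "t = (1 - h) * (s + 2 * g1 s * p1 s) + h * (lam s + 2 * G * B)"
    using assms(3) by (simp_all add: ruling_map_def curve_pt_def G_def B_def)
  have w: "0 < ruling_width s" using ruling_width_pos[OF s] by simp
  have below: "y - g1 s = h * ruling_width s" and above: "G - y = (1 - h) * ruling_width s"
    unfolding y ruling_width_def G_def[symmetric] by (simp_all add: algebra_simps)
  have "0 < h * ruling_width s" "0 < (1 - h) * ruling_width s" using h w by auto
  then show "s \<in> ruling_dom y" using below above s by (simp add: ruling_dom_def G_def)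
  have "ruling_frac y s = h" using below w by (simp add: ruling_frac_def)
  then show x_eq: "x = ruling_x y s" unfolding ruling_x_def x B_def by (simp add: algebra_simps)
  have lam: "lam s = s - 2 * (G - g1 s) * (B + p1 s)"
    using ruling_param_eq[OF s] by (simp add: ruling_width_def G_def B_def)
  have "ruling_t y s = s - 2 * (h * (G - g1 s)) * (p1 s + x)"
    unfolding ruling_t_def below x_eq[symmetric] by (simp add: ruling_width_def G_def)
  also have "\<dots> = t - 2 * y * x"
    unfolding t x y lam by (simp add: algebra_simps)
  finally show "t - 2 * y * x = ruling_t y s" by simp
qed

lemma is_interval_ruling_dom: "is_interval (ruling_dom y)"
  unfolding is_interval_1
proof (intro ballI allI impI)
  fix a b r assume a: "a \<in> ruling_dom y" and b: "b \<in> ruling_dom y" and r: "a \<le> r \<and> r \<le> b"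
  then have ab: "a \<in> {0<..<tb}" "b \<in> {0<..<tb}" by (simp_all add: ruling_dom_def)
  then have "r \<in> {0<..<tb}" using r by auto
  have "convex_on {a..b} g1"
    using g1_convex by (rule convex_on_subset) (use ab in auto)
  then have "g1 r \<le> max (g1 a) (g1 b)" using r by (intro convex_on_le_max) auto
  moreover have "min (g2 (lam a)) (g2 (lam b)) \<le> g2 (lam r)"
  proof -
    have "concave_on {lam a..lam b} g2"
      using g2_concave unfolding concave_on_def
      by (rule convex_on_subset) (use ruling_param(1)[OF ab(1)] ruling_param(1)[OF ab(2)] in auto)
    moreover have "lam r \<in> {lam a..lam b}"
      using ruling_param_mono[OF ab(1) \<open>r \<in> {0<..<tb}\<close>] ruling_param_mono[OF \<open>r \<in> {0<..<tb}\<close> ab(2)] r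
      by simp
    ultimately show ?thesis by (rule concave_on_ge_min)
  qed
  ultimately show "r \<in> ruling_dom y"
    using a b \<open>r \<in> {0<..<tb}\<close> by (auto simp: ruling_dom_def)
qed

lemma ruling_width_lipschitz: "(3 * Lg)-lipschitz_on {0<..<tb} ruling_width"
proof -
  have "(2 * Lg + Lg)-lipschitz_on {0<..<tb} (\<lambda>s. g2 (lam s) - g1 s)"
    by (intro lipschitz_on_diff lipschitz_on_comp_ruling_param g2_lip lipschitz_on_subset[OF g1_lip]) auto
  then show ?thesis by (simp add: ruling_width_def[abs_def] algebra_simps)
qed

lemma ruling_width_locally_comparable:
  assumes s0: "s0 \<in> {0<..<tb}"
  obtains d where "0 < d"
    and "\<And>s1 s2. s1 \<in> {0<..<tb} \<inter> ball s0 d \<Longrightarrow> s2 \<in> {0<..<tb} \<inter> ball s0 d \<Longrightarrow>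
           ruling_width s1 \<le> 2 * ruling_width s2"
proof -
  define w0 where "w0 = ruling_width s0"
  define d where "d = w0 / (9 * Lg + 1)"
  have "0 < w0" using ruling_width_pos(3)[OF s0] by (simp add: w0_def)
  then have "0 < d" using constants_nonneg by (simp add: d_def)
  have close: "\<bar>ruling_width s - w0\<bar> \<le> w0 / 3" if "s \<in> {0<..<tb} \<inter> ball s0 d" for s
  proof -
    have "\<bar>ruling_width s - w0\<bar> \<le> 3 * Lg * \<bar>s - s0\<bar>"
      using lipschitz_on_abs_diff[OF ruling_width_lipschitz] that s0 by (simp add: w0_def)
    also have "\<dots> \<le> 3 * Lg * d"
      using that constants_nonneg by (intro mult_left_mono) (auto simp: dist_real_def abs_minus_commute)
    also have "\<dots> \<le> w0 / 3"
      using \<open>0 < w0\<close> constants_nonneg by (simp add: d_def field_simps)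
    finally show ?thesis .
  qed
  show ?thesis
  proof (rule that[OF \<open>0 < d\<close>])
    fix s1 s2 assume "s1 \<in> {0<..<tb} \<inter> ball s0 d" "s2 \<in> {0<..<tb} \<inter> ball s0 d"
    then show "ruling_width s1 \<le> 2 * ruling_width s2"
      using abs_le_D1[OF close[of s1]] abs_le_D2[OF close[of s2]] by linarith
  qed
qed

lemma ruling_frac_bounds:
  assumes "s \<in> ruling_dom y"
  shows "0 < ruling_frac y s" "ruling_frac y s < 1" "ruling_frac y s * ruling_width s = y - g1 s"
proof -
  have "0 < ruling_width s" "g1 s < y" "y < g1 s + ruling_width s"
    using assms ruling_width_pos(3)[of s] by (auto simp: ruling_dom_def ruling_width_def)
  then show "0 < ruling_frac y s" "ruling_frac y s < 1" "ruling_frac y s * ruling_width s = y - g1 s"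
    by (simp_all add: ruling_frac_def field_simps)
qed

lemma abs_ruling_x_le:
  assumes "s \<in> ruling_dom y"
  shows "\<bar>ruling_x y s\<bar> \<le> Ph"
proof -
  define h where "h = ruling_frac y s"
  have "0 < h" "h < 1" using ruling_frac_bounds[OF assms] by (simp_all add: h_def)
  moreover have "\<bar>p1 s\<bar> \<le> Ph" "\<bar>p2 (lam s)\<bar> \<le> Ph"
    using assms ruling_param(1)[of s] p1_bound p2_bound by (auto simp: ruling_dom_def)
  moreover have "ruling_x y s = (1 - h) * p1 s + h * p2 (lam s)"
    by (simp add: ruling_x_def h_def algebra_simps)
  moreover have "(1 - h) * Ph + h * Ph = Ph" by (simp add: algebra_simps)
  ultimately show ?thesis
    using abs_mult_mono[of "1 - h" "1 - h" "p1 s" Ph] abs_mult_mono[of h h "p2 (lam s)" Ph]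
      abs_triangle_ineq[of "(1 - h) * p1 s" "h * p2 (lam s)"]
    by simp
qed

lemma height_bounds:
  assumes "s \<in> ruling_dom y"
  shows "\<bar>y\<bar> \<le> ruling_width s" "\<bar>y + g1 s\<bar> \<le> 2 * ruling_width s"
    "\<bar>y\<bar> \<le> Gm" "\<bar>y + g1 s\<bar> \<le> 2 * Gm"
proof -
  have s: "s \<in> {0<..<tb}" "g1 s < y" "y < g2 (lam s)" using assms by (auto simp: ruling_dom_def)
  have "\<bar>g1 s\<bar> \<le> Gm" "\<bar>g2 (lam s)\<bar> \<le> Gm"
    using s(1) ruling_param(1)[OF s(1)] g1_bound g2_bound by auto
  then show "\<bar>y\<bar> \<le> ruling_width s" "\<bar>y + g1 s\<bar> \<le> 2 * ruling_width s"
    "\<bar>y\<bar> \<le> Gm" "\<bar>y + g1 s\<bar> \<le> 2 * Gm"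
    using s ruling_width_pos[OF s(1)] by (auto simp: ruling_width_def abs_le_iff)
qed

context
  fixes y s1 s2 :: real
  assumes s1: "s1 \<in> ruling_dom y" and s2: "s2 \<in> ruling_dom y" and le: "s1 \<le> s2"
begin

lemma lipschitz_increments:
  "\<bar>g1 s2 - g1 s1\<bar> \<le> Lg * (s2 - s1)" "\<bar>p1 s2 - p1 s1\<bar> \<le> Lp * (s2 - s1)"
  "\<bar>g2 (lam s2) - g2 (lam s1)\<bar> \<le> 2 * Lg * (s2 - s1)"
  "\<bar>p2 (lam s2) - p2 (lam s1)\<bar> \<le> 2 * Lp * (s2 - s1)"
proof -
  have s: "s1 \<in> {0<..<tb}" "s2 \<in> {0<..<tb}" using s1 s2 by (auto simp: ruling_dom_def)
  then show "\<bar>g1 s2 - g1 s1\<bar> \<le> Lg * (s2 - s1)" "\<bar>p1 s2 - p1 s1\<bar> \<le> Lp * (s2 - s1)"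
    using lipschitz_on_abs_diff[OF g1_lip, of s2 s1] lipschitz_on_abs_diff[OF p1_lip, of s2 s1] le
    by auto
  show "\<bar>g2 (lam s2) - g2 (lam s1)\<bar> \<le> 2 * Lg * (s2 - s1)"
    "\<bar>p2 (lam s2) - p2 (lam s1)\<bar> \<le> 2 * Lp * (s2 - s1)"
    using lipschitz_on_abs_diff[OF lipschitz_on_comp_ruling_param[OF g2_lip] s(2,1)]
      lipschitz_on_abs_diff[OF lipschitz_on_comp_ruling_param[OF p2_lip] s(2,1)] le
    by auto
qed

lemma ruling_frac_increment:
  "\<bar>(ruling_frac y s2 - ruling_frac y s1) * ruling_width s2\<bar> \<le> 3 * Lg * (s2 - s1)"
proof -
  define h1 where "h1 = ruling_frac y s1"
  have h1: "0 < h1" "h1 < 1" using ruling_frac_bounds[OF s1] by (simp_all add: h1_def)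
  have "(ruling_frac y s2 - h1) * ruling_width s2
      = ruling_frac y s2 * ruling_width s2 - h1 * ruling_width s1 - h1 * (ruling_width s2 - ruling_width s1)"
    by (simp add: algebra_simps)
  also have "\<dots> = - ((1 - h1) * (g1 s2 - g1 s1)) - h1 * (g2 (lam s2) - g2 (lam s1))"
    using ruling_frac_bounds(3)[OF s1] ruling_frac_bounds(3)[OF s2]
    by (simp add: h1_def ruling_width_def algebra_simps)
  finally have "\<bar>(ruling_frac y s2 - h1) * ruling_width s2\<bar>
      \<le> \<bar>(1 - h1) * (g1 s2 - g1 s1)\<bar> + \<bar>h1 * (g2 (lam s2) - g2 (lam s1))\<bar>"
    using abs_triangle_ineq4[of "- ((1 - h1) * (g1 s2 - g1 s1))"] by simp
  also have "\<dots> \<le> 1 * (Lg * (s2 - s1)) + 1 * (2 * Lg * (s2 - s1))"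
    using h1 lipschitz_increments(1,3) by (intro add_mono abs_mult_mono) auto
  also have "\<dots> = 3 * Lg * (s2 - s1)" by (simp add: algebra_simps)
  finally show ?thesis by (simp add: h1_def)
qed

lemma ruling_x_increment:
  "\<bar>ruling_x y s2 - ruling_x y s1
      - (ruling_frac y s2 - ruling_frac y s1) * (p2 (lam s2) - p1 s2)\<bar> \<le> 3 * Lp * (s2 - s1)"
proof -
  define h1 where "h1 = ruling_frac y s1"
  have h1: "0 < h1" "h1 < 1" using ruling_frac_bounds[OF s1] by (simp_all add: h1_def)
  have "ruling_x y s2 - ruling_x y s1 - (ruling_frac y s2 - h1) * (p2 (lam s2) - p1 s2)
      = (1 - h1) * (p1 s2 - p1 s1) + h1 * (p2 (lam s2) - p2 (lam s1))"
    by (simp add: ruling_x_def h1_def algebra_simps)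
  then have "\<bar>ruling_x y s2 - ruling_x y s1 - (ruling_frac y s2 - h1) * (p2 (lam s2) - p1 s2)\<bar>
      \<le> \<bar>(1 - h1) * (p1 s2 - p1 s1)\<bar> + \<bar>h1 * (p2 (lam s2) - p2 (lam s1))\<bar>"
    by (simp only: abs_triangle_ineq)
  also have "\<dots> \<le> 1 * (Lp * (s2 - s1)) + 1 * (2 * Lp * (s2 - s1))"
    using h1 lipschitz_increments(2,4) by (intro add_mono abs_mult_mono) auto
  also have "\<dots> = 3 * Lp * (s2 - s1)" by (simp add: algebra_simps)
  finally show ?thesis by (simp add: h1_def)
qed

lemma weighted_ruling_x_increment:
  assumes "\<bar>c\<bar> \<le> k * Gm" "\<bar>c\<bar> \<le> k' * ruling_width s2"
  shows "\<bar>c * (ruling_x y s2 - ruling_x y s1)\<bar> \<le> (3 * k * Gm * Lp + 6 * k' * Lg * Ph) * (s2 - s1)"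
proof -
  define dh where "dh = ruling_frac y s2 - ruling_frac y s1"
  define M where "M = ruling_x y s2 - ruling_x y s1 - dh * (p2 (lam s2) - p1 s2)"
  have w: "0 < ruling_width s2" using s2 ruling_width_pos(3) by (auto simp: ruling_dom_def)
  have cM: "\<bar>c * M\<bar> \<le> (k * Gm) * (3 * Lp * (s2 - s1))"
    using assms(1) ruling_x_increment by (intro abs_mult_mono) (simp_all add: M_def dh_def)
  have "\<bar>c * dh\<bar> * ruling_width s2 = \<bar>c\<bar> * \<bar>dh * ruling_width s2\<bar>"
    using w by (simp add: abs_mult)
  also have "\<dots> \<le> (k' * ruling_width s2) * (3 * Lg * (s2 - s1))"
  proof (rule mult_mono)
    show "0 \<le> k' * ruling_width s2" using assms(2) abs_ge_zero order_trans by blast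
    show "\<bar>dh * ruling_width s2\<bar> \<le> 3 * Lg * (s2 - s1)" using ruling_frac_increment by (simp add: dh_def)
  qed (use assms(2) in simp_all)
  finally have "\<bar>c * dh\<bar> * ruling_width s2 \<le> (3 * k' * Lg * (s2 - s1)) * ruling_width s2"
    by (simp add: algebra_simps)
  then have "\<bar>c * dh\<bar> \<le> 3 * k' * Lg * (s2 - s1)" using w by (rule mult_right_le_imp_le)
  moreover have "\<bar>p2 (lam s2) - p1 s2\<bar> \<le> 2 * Ph"
  proof -
    have "s2 \<in> {0..tb}" "lam s2 \<in> {0..tb}" using s2 ruling_param(1)[of s2] by (auto simp: ruling_dom_def)
    then have "\<bar>p2 (lam s2)\<bar> \<le> Ph" "\<bar>p1 s2\<bar> \<le> Ph" using p1_bound p2_bound by auto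
    then show ?thesis using abs_triangle_ineq4[of "p2 (lam s2)" "p1 s2"] by linarith
  qed
  ultimately have cdh: "\<bar>c * dh * (p2 (lam s2) - p1 s2)\<bar> \<le> (3 * k' * Lg * (s2 - s1)) * (2 * Ph)"
    by (rule abs_mult_mono)
  have "c * (ruling_x y s2 - ruling_x y s1) = c * M + c * dh * (p2 (lam s2) - p1 s2)"
    by (simp add: M_def algebra_simps)
  then have "\<bar>c * (ruling_x y s2 - ruling_x y s1)\<bar> \<le> \<bar>c * M\<bar> + \<bar>c * dh * (p2 (lam s2) - p1 s2)\<bar>"
    by (simp only: abs_triangle_ineq)
  also have "\<dots> \<le> (k * Gm) * (3 * Lp * (s2 - s1)) + (3 * k' * Lg * (s2 - s1)) * (2 * Ph)"
    by (rule add_mono[OF cM cdh])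
  also have "\<dots> = (3 * k * Gm * Lp + 6 * k' * Lg * Ph) * (s2 - s1)"
    by (simp add: algebra_simps)
  finally show ?thesis .
qed

context
  assumes comparable: "ruling_width s1 \<le> 2 * ruling_width s2"
begin

lemma ruling_tr_increment:
  "\<bar>ruling_tr y s2 - ruling_tr y s1 - (s2 - s1)\<bar> \<le> 52 * ((Gm * Lp + Lg * Ph) * (s2 - s1))"
proof -
  define a where "a = Lg * Ph * (s2 - s1)"
  define b where "b = Gm * Lp * (s2 - s1)"
  have s: "s1 \<in> {0<..<tb}" "s2 \<in> {0<..<tb}" using s1 s2 by (auto simp: ruling_dom_def)
  have bounds: "\<bar>g1 s1\<bar> \<le> Gm" "\<bar>p1 s2\<bar> \<le> Ph" using s g1_bound p1_bound by auto
  have eq: "ruling_tr y s2 - ruling_tr y s1 - (s2 - s1)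
      = 2 * ((g1 s2 - g1 s1) * p1 s2) + 2 * (g1 s1 * (p1 s2 - p1 s1))
        + 2 * ((g1 s2 - g1 s1) * ruling_x y s2) + 2 * ((y + g1 s1) * (ruling_x y s2 - ruling_x y s1))
        - 2 * (y * (p1 s2 - p1 s1))"
    by (simp add: ruling_tr_def ruling_t_def algebra_simps)
  have T1: "\<bar>(g1 s2 - g1 s1) * p1 s2\<bar> \<le> a"
    using abs_mult_mono[OF lipschitz_increments(1) bounds(2)] by (simp add: a_def algebra_simps)
  have T2: "\<bar>g1 s1 * (p1 s2 - p1 s1)\<bar> \<le> b"
    using abs_mult_mono[OF bounds(1) lipschitz_increments(2)] by (simp add: b_def algebra_simps)
  have T3: "\<bar>(g1 s2 - g1 s1) * ruling_x y s2\<bar> \<le> a"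
    using abs_mult_mono[OF lipschitz_increments(1) abs_ruling_x_le[OF s2]] by (simp add: a_def algebra_simps)
  have T4: "\<bar>(y + g1 s1) * (ruling_x y s2 - ruling_x y s1)\<bar> \<le> 6 * b + 24 * a"
    using weighted_ruling_x_increment[of "y + g1 s1" 2 4] height_bounds[OF s1] comparable
    by (simp add: a_def b_def algebra_simps)
  have T5: "\<bar>y * (p1 s2 - p1 s1)\<bar> \<le> b"
    using abs_mult_mono[OF height_bounds(3)[OF s1] lipschitz_increments(2)] by (simp add: b_def algebra_simps)
  note bounds = abs_le_D1[OF T1] abs_le_D2[OF T1] abs_le_D1[OF T2] abs_le_D2[OF T2]
    abs_le_D1[OF T3] abs_le_D2[OF T3] abs_le_D1[OF T4] abs_le_D2[OF T4] abs_le_D1[OF T5] abs_le_D2[OF T5]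
  have "52 * ((Gm * Lp + Lg * Ph) * (s2 - s1)) = 52 * a + 52 * b"
    by (simp add: a_def b_def algebra_simps)
  moreover have "0 \<le> b" using constants_nonneg le by (simp add: b_def)
  ultimately show ?thesis
    unfolding eq by (intro abs_leI) (use bounds in linarith)+
qed

lemma ruling_t_increment:
  "\<bar>ruling_t y s2 - ruling_t y s1 - (s2 - s1)\<bar> \<le> 76 * ((Gm * Lp + Lg * Ph) * (s2 - s1))"
proof -
  have "ruling_t y s2 - ruling_t y s1 - (s2 - s1)
      = (ruling_tr y s2 - ruling_tr y s1 - (s2 - s1)) - 4 * (y * (ruling_x y s2 - ruling_x y s1))"
    by (simp add: ruling_tr_def algebra_simps)
  then have "\<bar>ruling_t y s2 - ruling_t y s1 - (s2 - s1)\<bar>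
      \<le> \<bar>ruling_tr y s2 - ruling_tr y s1 - (s2 - s1)\<bar> + 4 * \<bar>y * (ruling_x y s2 - ruling_x y s1)\<bar>"
    using abs_triangle_ineq4[of "ruling_tr y s2 - ruling_tr y s1 - (s2 - s1)"
        "4 * (y * (ruling_x y s2 - ruling_x y s1))"]
    by (simp add: abs_mult)
  also have "\<dots> \<le> 52 * ((Gm * Lp + Lg * Ph) * (s2 - s1))
      + 4 * ((3 * 1 * Gm * Lp + 6 * 1 * Lg * Ph) * (s2 - s1))"
    using height_bounds[OF s2]
    by (intro add_mono ruling_tr_increment mult_left_mono weighted_ruling_x_increment) auto
  also have "\<dots> \<le> 76 * ((Gm * Lp + Lg * Ph) * (s2 - s1))"
  proof -
    have "0 \<le> Gm * Lp * (s2 - s1)" using constants_nonneg le by simp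
    then show ?thesis by (simp add: algebra_simps)
  qed
  finally show ?thesis .
qed

end

end

text \<open>The widths of the rulings are comparable only for nearby base points, so the increment
  estimates are globalised along \<open>ruling_dom y\<close> by \<open>mono_on_if_locally_mono_on\<close>.\<close>

lemma mono_on_ruling_dom:
  fixes F :: "real \<Rightarrow> real"
  assumes F: "\<And>s1 s2. s1 \<in> ruling_dom y \<Longrightarrow> s2 \<in> ruling_dom y \<Longrightarrow> s1 \<le> s2 \<Longrightarrow>
      ruling_width s1 \<le> 2 * ruling_width s2 \<Longrightarrow> F s1 \<le> F s2"
  shows "mono_on (ruling_dom y) F"
proof (rule mono_on_if_locally_mono_on[OF is_interval_ruling_dom])
  fix s assume "s \<in> ruling_dom y"
  then obtain d where "0 < d" and comparable:
    "\<And>s1 s2. s1 \<in> {0<..<tb} \<inter> ball s d \<Longrightarrow> s2 \<in> {0<..<tb} \<inter> ball s d \<Longrightarrow>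
       ruling_width s1 \<le> 2 * ruling_width s2"
    using ruling_width_locally_comparable by (auto simp: ruling_dom_def)
  have "mono_on (ruling_dom y \<inter> ball s d) F"
    using F comparable by (intro mono_onI) (auto simp: ruling_dom_def)
  with \<open>0 < d\<close> show "\<exists>d>0. mono_on (ruling_dom y \<inter> ball s d) F" by blast
qed

lemma ruling_coords_increment:
  assumes "s1 \<in> ruling_dom y" "s2 \<in> ruling_dom y" "s1 \<le> s2"
  shows "(s2 - s1) / 4 \<le> ruling_tr y s2 - ruling_tr y s1"
    and "\<bar>ruling_t y s2 - ruling_t y s1\<bar> \<le> 3 * (s2 - s1)"
proof -
  have local: "ruling_tr y t1 - t1 / 4 \<le> ruling_tr y t2 - t2 / 4"
    "3 * t1 - ruling_t y t1 \<le> 3 * t2 - ruling_t y t2"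
    "3 * t1 + ruling_t y t1 \<le> 3 * t2 + ruling_t y t2"
    if "t1 \<in> ruling_dom y" "t2 \<in> ruling_dom y" "t1 \<le> t2" "ruling_width t1 \<le> 2 * ruling_width t2"
    for t1 t2
  proof -
    have "96 * ((Gm * Lp + Lg * Ph) * (t2 - t1)) \<le> t2 - t1"
      using mult_right_mono[OF cross_terms_small, of "t2 - t1"] that(3) by simp
    note bounds = this ruling_tr_increment[OF that, THEN abs_le_D1]
      ruling_tr_increment[OF that, THEN abs_le_D2] ruling_t_increment[OF that, THEN abs_le_D1]
      ruling_t_increment[OF that, THEN abs_le_D2]
    show "ruling_tr y t1 - t1 / 4 \<le> ruling_tr y t2 - t2 / 4" using bounds by linarith
    show "3 * t1 - ruling_t y t1 \<le> 3 * t2 - ruling_t y t2" using bounds by linarith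
    show "3 * t1 + ruling_t y t1 \<le> 3 * t2 + ruling_t y t2" using bounds by linarith
  qed
  have "mono_on (ruling_dom y) (\<lambda>s. ruling_tr y s - s / 4)"
    "mono_on (ruling_dom y) (\<lambda>s. 3 * s - ruling_t y s)"
    "mono_on (ruling_dom y) (\<lambda>s. 3 * s + ruling_t y s)"
    by (intro mono_on_ruling_dom local; assumption)+
  note increasing = mono_onD[OF this(1) assms] mono_onD[OF this(2) assms] mono_onD[OF this(3) assms]
  have "(s2 - s1) / 4 = s2 / 4 - s1 / 4" by (simp add: diff_divide_distrib)
  then show "(s2 - s1) / 4 \<le> ruling_tr y s2 - ruling_tr y s1" using increasing(1) by simp
  have "3 * (s2 - s1) = 3 * s2 - 3 * s1" by simp
  then show "\<bar>ruling_t y s2 - ruling_t y s1\<bar> \<le> 3 * (s2 - s1)"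
    using increasing(2,3) by (simp add: abs_le_iff)
qed

lemma ruling_t_le_ruling_tr:
  assumes "s1 \<in> ruling_dom y" "s2 \<in> ruling_dom y"
  shows "\<bar>ruling_t y s1 - ruling_t y s2\<bar> \<le> 12 * \<bar>ruling_tr y s1 - ruling_tr y s2\<bar>"
  using ruling_coords_increment[OF assms] ruling_coords_increment[OF assms(2,1)]
  by (cases "s1 \<le> s2") (auto simp: abs_minus_commute abs_le_iff)

end

section \<open>From left to right intrinsic graphs\<close>

locale ruled_graph = ruling_data +
  fixes u :: "real \<times> real \<Rightarrow> real" and D :: "(real \<times> real) set" and L :: real
  assumes D_def: "D = {(y, t). t \<in> {0<..<tb} \<and> g1 t < y \<and> y < g2 t}"
    and u_lip: "L-lipschitz_on D u"
    and graph_eq: "left_graph u D = ruled_surface tb g1 g2 \<phi>"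
begin

lemma open_D: "open D"
  unfolding D_def using lipschitz_on_continuous_on[OF g1_lip] lipschitz_on_continuous_on[OF g2_lip]
  by (intro open_region_between) (auto elim: continuous_on_subset)

lemma left_graph_point_on_ruling:
  assumes "(y, t) \<in> D"
  obtains s where "s \<in> ruling_dom y" "u (y, t) = ruling_x y s" "t = ruling_t y s"
proof -
  have "(u (y, t), y, t + 2 * y * u (y, t)) \<in> ruled_surface tb g1 g2 \<phi>"
    using assms unfolding graph_eq[symmetric] left_graph_def by force
  then obtain h s where "s \<in> {0<..<tb}" "h \<in> {0<..<1}"
    "ruling_map tb g1 g2 \<phi> (h, s) = (u (y, t), y, t + 2 * y * u (y, t))"
    by (auto simp: ruled_surface_def)
  from ruling_map_coords[OF this] show ?thesis by (intro that) auto
qed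

lemma vertical_increment_le:
  assumes "(y, t1) \<in> D" "(y, t2) \<in> D"
  shows "\<bar>t1 - t2\<bar> \<le> 12 * \<bar>(t1 + 4 * y * u (y, t1)) - (t2 + 4 * y * u (y, t2))\<bar>"
proof -
  obtain s1 where "s1 \<in> ruling_dom y" "u (y, t1) = ruling_x y s1" "t1 = ruling_t y s1"
    using left_graph_point_on_ruling[OF assms(1)] .
  moreover obtain s2 where "s2 \<in> ruling_dom y" "u (y, t2) = ruling_x y s2" "t2 = ruling_t y s2"
    using left_graph_point_on_ruling[OF assms(2)] .
  ultimately show ?thesis using ruling_t_le_ruling_tr[of s1 y s2] by (simp add: ruling_tr_def)
qed

text \<open>The point \<open>(u, y, t + 2 y u)\<close> of the left graph equals \<open>(u, y, t' - 2 y u)\<close> with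
  \<open>t' = t + 4 y u\<close>, so \<open>right_coords\<close> turns left-graph coordinates into right-graph ones.\<close>

definition right_coords :: "real \<times> real \<Rightarrow> real \<times> real" where
  "right_coords p = (fst p, snd p + 4 * fst p * u p)"

lemma inj_on_right_coords: "inj_on right_coords D"
proof (rule inj_onI)
  fix p q assume "p \<in> D" "q \<in> D" "right_coords p = right_coords q"
  moreover obtain y1 t1 y2 t2 where "p = (y1, t1)" "q = (y2, t2)" by fastforce
  ultimately show "p = q" using vertical_increment_le[of y1 t1 t2] by (auto simp: right_coords_def)
qed

lemma open_right_coords_image:
  assumes "open S" "S \<subseteq> D"
  shows "open (right_coords ` S)"
proof (rule invariance_of_domain[OF _ assms(1)])
  show "continuous_on S right_coords"
    unfolding right_coords_def using continuous_on_subset[OF lipschitz_on_continuous_on[OF u_lip] assms(2)]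
    by (intro continuous_intros) auto
  show "inj_on right_coords S" using inj_on_subset[OF inj_on_right_coords assms(2)] .
qed

lemma right_graph_eq_left_graph:
  "right_graph (u \<circ> inv_into D right_coords) (right_coords ` D) = left_graph u D"
  unfolding right_graph_def left_graph_def image_image
proof (intro image_cong refl)
  fix p assume "p \<in> D"
  moreover obtain y t where p: "p = (y, t)" by fastforce
  ultimately have "inv_into D right_coords (y, t + 4 * y * u (y, t)) = (y, t)"
    using inv_into_f_f[OF inj_on_right_coords] by (force simp: right_coords_def)
  then show "(\<lambda>(y, t). ((u \<circ> inv_into D right_coords) (y, t), y, t - 2 * y * (u \<circ> inv_into D right_coords) (y, t)))
      (right_coords p) = (\<lambda>(y, t). (u (y, t), y, t + 2 * y * u (y, t))) p"
    by (simp add: p right_coords_def algebra_simps)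
qed

text \<open>The two points are compared through \<open>(y\<^sub>2, t\<^sub>1)\<close>, which lies on the slice of the second one.\<close>

lemma t_increment_le_right_coords:
  assumes "(y1, t1) \<in> D" "(y2, t2) \<in> D" "(y2, t1) \<in> D" "\<bar>y2\<bar> \<le> Y" "\<bar>u (y1, t1)\<bar> \<le> M"
  shows "\<bar>t1 - t2\<bar> \<le> 12 * ((1 + 4 * (Y * L + M)) * dist (right_coords (y1, t1)) (right_coords (y2, t2)))"
proof -
  define R where "R = dist (right_coords (y1, t1)) (right_coords (y2, t2))"
  define K where "K = 4 * (Y * L + M)"
  have "0 \<le> L" using lipschitz_on_nonneg[OF u_lip] .
  moreover have "0 \<le> Y" "0 \<le> M" using assms(4,5) by (auto intro: order_trans[OF abs_ge_zero])
  ultimately have "0 \<le> K" by (simp add: K_def)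
  have dy: "\<bar>y1 - y2\<bar> \<le> R"
    using dist_fst_le[of "right_coords (y1, t1)" "right_coords (y2, t2)"]
    by (simp add: R_def right_coords_def dist_real_def)
  have dt: "\<bar>(t1 + 4 * y1 * u (y1, t1)) - (t2 + 4 * y2 * u (y2, t2))\<bar> \<le> R"
    using dist_snd_le[of "right_coords (y1, t1)" "right_coords (y2, t2)"]
    by (simp add: R_def right_coords_def dist_real_def)
  have "\<bar>u (y2, t1) - u (y1, t1)\<bar> \<le> L * \<bar>y1 - y2\<bar>"
    using lipschitz_onD[OF u_lip assms(3,1)] by (simp add: dist_Pair_Pair dist_real_def abs_minus_commute)
  then have e1: "\<bar>4 * y2 * (u (y2, t1) - u (y1, t1))\<bar> \<le> (4 * Y) * (L * \<bar>y1 - y2\<bar>)"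
    using assms(4) by (intro abs_mult_mono) auto
  have e2: "\<bar>4 * (y2 - y1) * u (y1, t1)\<bar> \<le> (4 * \<bar>y1 - y2\<bar>) * M"
    using assms(5) by (intro abs_mult_mono) auto
  have "(t1 + 4 * y2 * u (y2, t1)) - (t2 + 4 * y2 * u (y2, t2))
      = ((t1 + 4 * y1 * u (y1, t1)) - (t2 + 4 * y2 * u (y2, t2)))
        + 4 * y2 * (u (y2, t1) - u (y1, t1)) + 4 * (y2 - y1) * u (y1, t1)"
    by (simp add: algebra_simps)
  moreover have "(4 * Y) * (L * \<bar>y1 - y2\<bar>) + (4 * \<bar>y1 - y2\<bar>) * M = K * \<bar>y1 - y2\<bar>"
    by (simp add: K_def algebra_simps)
  ultimately have "\<bar>(t1 + 4 * y2 * u (y2, t1)) - (t2 + 4 * y2 * u (y2, t2))\<bar> \<le> R + K * \<bar>y1 - y2\<bar>"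
    using dt e1 e2
      abs_triangle_ineq[of "(t1 + 4 * y1 * u (y1, t1)) - (t2 + 4 * y2 * u (y2, t2))"
        "4 * y2 * (u (y2, t1) - u (y1, t1))"]
      abs_triangle_ineq[of "(t1 + 4 * y1 * u (y1, t1)) - (t2 + 4 * y2 * u (y2, t2))
          + 4 * y2 * (u (y2, t1) - u (y1, t1))" "4 * (y2 - y1) * u (y1, t1)"]
    by linarith
  also have "\<dots> \<le> R + K * R" using dy \<open>0 \<le> K\<close> by (simp add: mult_left_mono)
  also have "\<dots> = (1 + K) * R" by (simp add: algebra_simps)
  finally have "12 * \<bar>(t1 + 4 * y2 * u (y2, t1)) - (t2 + 4 * y2 * u (y2, t2))\<bar> \<le> 12 * ((1 + K) * R)"
    by simp
  with vertical_increment_le[OF assms(3,2)] show ?thesis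
    unfolding K_def[symmetric] R_def[symmetric] by (rule order_trans)
qed

lemma lipschitz_through_right_coords:
  assumes "A \<times> T \<subseteq> D" "\<forall>y\<in>A. \<bar>y\<bar> \<le> Y" "\<forall>p\<in>A \<times> T. \<bar>u p\<bar> \<le> M"
    and "p \<in> A \<times> T" "q \<in> A \<times> T"
  shows "\<bar>u p - u q\<bar> \<le> L * (13 + 48 * (Y * L + M)) * dist (right_coords p) (right_coords q)"
proof -
  obtain y1 t1 y2 t2 where p: "p = (y1, t1)" and q: "q = (y2, t2)" by fastforce
  define R where "R = dist (right_coords p) (right_coords q)"
  define K where "K = 4 * (Y * L + M)"
  have "(y2, t1) \<in> A \<times> T" using assms(4,5) by (simp add: p q)
  then have D: "p \<in> D" "q \<in> D" "(y2, t1) \<in> D" using assms(1,4,5) by auto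
  have "0 \<le> L" using lipschitz_on_nonneg[OF u_lip] .
  have dy: "\<bar>y1 - y2\<bar> \<le> R"
    using dist_fst_le[of "right_coords p" "right_coords q"] by (simp add: R_def right_coords_def p q dist_real_def)
  have dt: "\<bar>t1 - t2\<bar> \<le> 12 * ((1 + K) * R)"
    unfolding K_def R_def p q
    by (rule t_increment_le_right_coords) (use D assms(2-5) in \<open>auto simp: p q\<close>)
  have "dist p q \<le> \<bar>y1 - y2\<bar> + \<bar>t1 - t2\<bar>"
    using dist_Pair_le[of y1 t1 y2 t2] by (simp add: p q dist_real_def)
  then have "\<bar>u p - u q\<bar> \<le> L * (\<bar>y1 - y2\<bar> + \<bar>t1 - t2\<bar>)"
    using lipschitz_onD[OF u_lip D(1,2)] mult_left_mono[OF _ \<open>0 \<le> L\<close>] by (force simp: dist_real_def)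
  also have "\<dots> \<le> L * ((13 + 12 * K) * R)"
    using dy dt \<open>0 \<le> L\<close> by (intro mult_left_mono) (auto simp: algebra_simps)
  finally show ?thesis by (simp add: R_def K_def algebra_simps)
qed

lemma box_nhd_bounded:
  assumes p0: "(y0, t0) \<in> D"
  obtains A T Y M where "open A" "open T" "(y0, t0) \<in> A \<times> T" "A \<times> T \<subseteq> D"
    "\<forall>y\<in>A. \<bar>y\<bar> \<le> Y" "\<forall>p\<in>A \<times> T. \<bar>u p\<bar> \<le> M"
proof -
  obtain r where "r > 0" "ball (y0, t0) r \<subseteq> D" using open_D p0 open_contains_ball by blast
  define A where "A = ball y0 (r / 2)"
  define T where "T = ball t0 (r / 2)"
  have near: "dist p (y0, t0) < r" if "p \<in> A \<times> T" for p
    using that dist_Pair_le[of "fst p" "snd p" y0 t0] by (auto simp: A_def T_def dist_commute)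
  then have AT: "A \<times> T \<subseteq> D" using \<open>ball (y0, t0) r \<subseteq> D\<close> by (auto simp: dist_commute)
  have A_bound: "\<forall>y\<in>A. \<bar>y\<bar> \<le> \<bar>y0\<bar> + r"
  proof
    fix y assume "y \<in> A"
    then have "\<bar>y - y0\<bar> < r" using \<open>r > 0\<close> by (simp add: A_def dist_real_def abs_minus_commute)
    then show "\<bar>y\<bar> \<le> \<bar>y0\<bar> + r" using abs_triangle_ineq[of "y - y0" y0] by simp
  qed
  have u_bound: "\<forall>p\<in>A \<times> T. \<bar>u p\<bar> \<le> \<bar>u (y0, t0)\<bar> + L * r"
  proof
    fix p assume "p \<in> A \<times> T"
    then have "L * dist p (y0, t0) \<le> L * r"
      using near[of p] lipschitz_on_nonneg[OF u_lip] by (intro mult_left_mono) auto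
    then have "\<bar>u p - u (y0, t0)\<bar> \<le> L * r"
      using lipschitz_onD[OF u_lip, of p "(y0, t0)"] \<open>p \<in> A \<times> T\<close> AT p0 by (force simp: dist_real_def)
    then show "\<bar>u p\<bar> \<le> \<bar>u (y0, t0)\<bar> + L * r" by linarith
  qed
  show ?thesis
    by (rule that[OF _ _ _ AT A_bound u_bound]) (use \<open>r > 0\<close> in \<open>auto simp: A_def T_def\<close>)
qed

lemma locally_lipschitz_on_right_coords_inverse:
  "locally_lipschitz_on (u \<circ> inv_into D right_coords) (right_coords ` D)"
  unfolding locally_lipschitz_on_def
proof
  fix q0 assume "q0 \<in> right_coords ` D"
  then obtain y0 t0 where p0: "(y0, t0) \<in> D" and q0: "q0 = right_coords (y0, t0)" by auto
  obtain A T Y M where box: "open A" "open T" "(y0, t0) \<in> A \<times> T" "A \<times> T \<subseteq> D"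
    and bounds: "\<forall>y\<in>A. \<bar>y\<bar> \<le> Y" "\<forall>p\<in>A \<times> T. \<bar>u p\<bar> \<le> M"
    using box_nhd_bounded[OF p0] .
  have "open (right_coords ` (A \<times> T))" using box by (intro open_right_coords_image open_Times)
  moreover have "q0 \<in> right_coords ` (A \<times> T)" using box(3) q0 by blast
  ultimately obtain e where "e > 0" and e: "ball q0 e \<subseteq> right_coords ` (A \<times> T)"
    using open_contains_ball by blast
  define C where "C = L * (13 + 48 * (Y * L + M))"
  have "C-lipschitz_on (ball q0 e \<inter> right_coords ` D) (u \<circ> inv_into D right_coords)"
  proof (rule lipschitz_onI)
    fix q q' assume "q \<in> ball q0 e \<inter> right_coords ` D" "q' \<in> ball q0 e \<inter> right_coords ` D"
    then obtain p p' where "p \<in> A \<times> T" "p' \<in> A \<times> T" "q = right_coords p" "q' = right_coords p'"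
      using e by blast
    moreover have "inv_into D right_coords (right_coords x) = x" if "x \<in> A \<times> T" for x
      using that box(4) inj_on_right_coords by auto
    ultimately show "dist ((u \<circ> inv_into D right_coords) q) ((u \<circ> inv_into D right_coords) q') \<le> C * dist q q'"
      using lipschitz_through_right_coords[OF box(4) bounds] by (simp add: dist_real_def C_def)
  next
    have "\<bar>y0\<bar> \<le> Y" "\<bar>u (y0, t0)\<bar> \<le> M" using bounds box(3) by auto
    then have "0 \<le> Y" "0 \<le> M" by (auto intro: order_trans[OF abs_ge_zero])
    then show "0 \<le> C" using lipschitz_on_nonneg[OF u_lip] by (simp add: C_def)
  qed
  with \<open>e > 0\<close> show "\<exists>e>0. \<exists>C. C-lipschitz_on (ball q0 e \<inter> right_coords ` D) (u \<circ> inv_into D right_coords)"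
    by blast
qed

theorem right_graph_representation:
  "\<exists>Dr ur. open Dr \<and> locally_lipschitz_on ur Dr \<and> left_graph u D = right_graph ur Dr"
  using open_right_coords_image[OF open_D order_refl] locally_lipschitz_on_right_coords_inverse
    right_graph_eq_left_graph by metis

end

theorem proposition1p2:
  fixes tbar :: real and \<gamma>1 \<gamma>2 :: "real \<Rightarrow> real"
    and \<phi> u :: "real \<times> real \<Rightarrow> real" and D :: "(real \<times> real) set"
  assumes tbar: "tbar > 0"
    and g1_lip: "\<exists>L. L-lipschitz_on {0<..<tbar} \<gamma>1"
    and g2_lip: "\<exists>L. L-lipschitz_on {0<..<tbar} \<gamma>2"
    and g1_cont: "continuous_on {0..tbar} \<gamma>1"
    and g2_cont: "continuous_on {0..tbar} \<gamma>2"
    and g_sign: "\<forall>t\<in>{0<..<tbar}. \<gamma>1 t < 0 \<and> 0 < \<gamma>2 t"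
    and g_ends: "\<gamma>1 0 = 0" "\<gamma>1 tbar = 0" "\<gamma>2 0 = 0" "\<gamma>2 tbar = 0"
    and g1_convex: "convex_on {0<..<tbar} \<gamma>1"
    and g2_concave: "concave_on {0<..<tbar} \<gamma>2"
    and D_def: "D = {(y,t). t \<in> {0<..<tbar} \<and> \<gamma>1 t < y \<and> y < \<gamma>2 t}"
    and phi_cont: "continuous_on (frontier D) \<phi>"
    and phi1_lip: "\<exists>L. L-lipschitz_on {0<..<tbar} (bdry_fun \<phi> \<gamma>1)"
    and phi2_lip: "\<exists>L. L-lipschitz_on {0<..<tbar} (bdry_fun \<phi> \<gamma>2)"
    and zeta_small: "zeta {0<..<tbar} \<gamma>1 \<gamma>2 \<phi> < (sqrt 721 - 25) / 48"
    and u_lip: "\<exists>L. L-lipschitz_on D u"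
    and u_cont: "continuous_on (closure D) u"
    and u_bdry: "\<forall>p\<in>frontier D. u p = \<phi> p"
    and graph_eq: "left_graph u D = ruled_surface tbar \<gamma>1 \<gamma>2 \<phi>"
  shows "\<exists>Dr :: (real \<times> real) set. \<exists>ur :: real \<times> real \<Rightarrow> real.
           open Dr \<and> locally_lipschitz_on ur Dr \<and> left_graph u D = right_graph ur Dr"
proof -
  define I where "I = {0<..<tbar}"
  define Gm where "Gm = max (sup_norm \<gamma>1 I) (sup_norm \<gamma>2 I)"
  define Lg where "Lg = max (lip_const \<gamma>1 I) (lip_const \<gamma>2 I)"
  define Ph where "Ph = max (sup_norm (bdry_fun \<phi> \<gamma>1) I) (sup_norm (bdry_fun \<phi> \<gamma>2) I)"
  define Lp where "Lp = max (lip_const (bdry_fun \<phi> \<gamma>1) I) (lip_const (bdry_fun \<phi> \<gamma>2) I)"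
  have "\<forall>t\<in>{0<..<tbar}. \<gamma>1 t < \<gamma>2 t" using g_sign by force
  then have phi_i_cont: "continuous_on {0..tbar} (bdry_fun \<phi> \<gamma>1)" "continuous_on {0..tbar} (bdry_fun \<phi> \<gamma>2)"
    using boundary_curves_in_frontier[OF tbar g1_cont g2_cont _ D_def]
    by (auto intro!: continuous_on_bdry_fun[OF phi_cont] g1_cont g2_cont)
  note hyps = g1_lip g2_lip phi1_lip phi2_lip g1_cont g2_cont phi_i_cont
  have lips: "Lg-lipschitz_on {0..tbar} \<gamma>1" "Lg-lipschitz_on {0..tbar} \<gamma>2"
    "Lp-lipschitz_on {0..tbar} (bdry_fun \<phi> \<gamma>1)" "Lp-lipschitz_on {0..tbar} (bdry_fun \<phi> \<gamma>2)"
    by (rule lipschitz_on_Icc_if_lip_const_le[OF tbar]; simp add: I_def Lg_def Lp_def hyps)+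
  have bounds: "\<forall>t\<in>{0..tbar}. \<bar>\<gamma>1 t\<bar> \<le> Gm" "\<forall>t\<in>{0..tbar}. \<bar>\<gamma>2 t\<bar> \<le> Gm"
    "\<forall>t\<in>{0..tbar}. \<bar>bdry_fun \<phi> \<gamma>1 t\<bar> \<le> Ph" "\<forall>t\<in>{0..tbar}. \<bar>bdry_fun \<phi> \<gamma>2 t\<bar> \<le> Ph"
    by (rule abs_le_Icc_if_sup_norm_le[OF tbar]; simp add: I_def Gm_def Ph_def hyps)+
  have small: "(Gm + Lg) * (Ph + Lp) \<le> 1/96"
  proof -
    have "(sqrt 721 - 25) / 48 \<le> (1/24::real)" using real_sqrt_le_mono[of 721 729] by simp
    moreover have "zeta {0<..<tbar} \<gamma>1 \<gamma>2 \<phi> = 4 * ((Gm + Lg) * (Ph + Lp))"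
      by (simp add: zeta_def Gm_def Lg_def Ph_def Lp_def I_def)
    ultimately show ?thesis using zeta_small by simp
  qed
  obtain L where "L-lipschitz_on D u" using u_lip by blast
  then have "ruled_graph tbar \<gamma>1 \<gamma>2 \<phi> Gm Lg Ph Lp u D L"
    using tbar g_ends g1_convex g2_concave lips bounds small D_def graph_eq
    by unfold_locales (use g_sign in auto)
  then show ?thesis by (rule ruled_graph.right_graph_representation)
qed

end
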